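(* Let $K\subset\mathbb{R}^n$ and $C\subset\mathbb{R}^m$ be nonempty, convex, closed and bounded sets, and let $f,h:\mathbb{R}^n\times\mathbb{R}^m\to\mathbb{R}$ be continuous functions such that, for every $y\in K$, $f(y,\cdot)$ and $h(y,\cdot)$ are convex, and such that $f$ takes only positive values. Let $\varepsilon>0$ and $y\in K$. Then the problem $\min\{h(y,z)+\varepsilon f^2(y,z)\mid z\in C\}$ admits at least one solution, i.e. $\mathcal{S}_\varepsilon(y)\neq\emptyset$, where $\mathcal{S}_\varepsilon(y)=\operatorname{argmin}\{h(y,z)+\varepsilon f^2(y,z)\mid z\in C\}$. Moreover, there exists a constant $\kappa_y\in\mathbb{R}$ such that $f(y,x)=\kappa_y$ for all $x\in\mathcal{S}_\varepsilon(y)$.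
   Context: $f^2(y,z)$ denotes $(f(y,z))^2$. *)

theory Defs
  imports "HOL-Analysis.Analysis"
begin

definition S_eps ::
  "('a \<times> 'b \<Rightarrow> real) \<Rightarrow> ('a \<times> 'b \<Rightarrow> real) \<Rightarrow> 'b set \<Rightarrow> real \<Rightarrow> 'a \<Rightarrow> 'b set" where
  "S_eps h f C \<epsilon> y =
     {z \<in> C. \<forall>w \<in> C. h (y, z) + \<epsilon> * (f (y, z))\<^sup>2 \<le> h (y, w) + \<epsilon> * (f (y, w))\<^sup>2}"

end

theory Submission
  imports Defs
begin

text \<open>Existence: the objective is continuous on the compact set C. Uniqueness of the value of f:
  if two minimisers x1, x2 had different values of f, then at their midpoint h(y,.) is at most the
  average of its values, while f(y,.)^2 is strictly below the average, because f(y,.) is convex and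
  positive and the square is strictly convex; so the midpoint would do strictly better.\<close>

lemma square_convex_combination_less:
  fixes a b t :: real
  assumes "a \<noteq> b" "0 < t" "t < 1"
  shows "((1 - t) * a + t * b)\<^sup>2 < (1 - t) * a\<^sup>2 + t * b\<^sup>2"
proof -
  have "(1 - t) * a\<^sup>2 + t * b\<^sup>2 - ((1 - t) * a + t * b)\<^sup>2 = (1 - t) * t * (a - b)\<^sup>2"
    by (simp add: power2_eq_square algebra_simps)
  moreover have "0 < (1 - t) * t * (a - b)\<^sup>2"
    using assms by simp
  ultimately show ?thesis by linarith
qed

lemma convex_on_nonneg_square_less:
  fixes \<phi> :: "'a::real_vector \<Rightarrow> real"
  assumes "convex_on S \<phi>" "x \<in> S" "y \<in> S" "0 < t" "t < 1"
    and "0 \<le> \<phi> ((1 - t) *\<^sub>R x + t *\<^sub>R y)" "\<phi> x \<noteq> \<phi> y"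
  shows "(\<phi> ((1 - t) *\<^sub>R x + t *\<^sub>R y))\<^sup>2 < (1 - t) * (\<phi> x)\<^sup>2 + t * (\<phi> y)\<^sup>2"
proof -
  have "\<phi> ((1 - t) *\<^sub>R x + t *\<^sub>R y) \<le> (1 - t) * \<phi> x + t * \<phi> y"
    using convex_onD[OF assms(1)] assms(2-5) by simp
  then have "(\<phi> ((1 - t) *\<^sub>R x + t *\<^sub>R y))\<^sup>2 \<le> ((1 - t) * \<phi> x + t * \<phi> y)\<^sup>2"
    using assms(6) by (rule power_mono)
  also have "\<dots> < (1 - t) * (\<phi> x)\<^sup>2 + t * (\<phi> y)\<^sup>2"
    using assms(7,4,5) by (rule square_convex_combination_less)
  finally show ?thesis .
qed

lemma argmin_convex_plus_square_const:
  fixes \<eta> \<phi> :: "'a::real_vector \<Rightarrow> real"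
  assumes "convex C" "convex_on C \<eta>" "convex_on C \<phi>" "\<And>z. z \<in> C \<Longrightarrow> 0 \<le> \<phi> z" "0 < \<epsilon>"
    and "x1 \<in> C" "x2 \<in> C"
    and "\<And>w. w \<in> C \<Longrightarrow> \<eta> x1 + \<epsilon> * (\<phi> x1)\<^sup>2 \<le> \<eta> w + \<epsilon> * (\<phi> w)\<^sup>2"
    and "\<And>w. w \<in> C \<Longrightarrow> \<eta> x2 + \<epsilon> * (\<phi> x2)\<^sup>2 \<le> \<eta> w + \<epsilon> * (\<phi> w)\<^sup>2"
  shows "\<phi> x1 = \<phi> x2"
proof (rule ccontr)
  assume ne: "\<phi> x1 \<noteq> \<phi> x2"
  define m where "m = (1 - 1/2) *\<^sub>R x1 + (1/2::real) *\<^sub>R x2"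
  have "m \<in> C"
    unfolding m_def using convexD_alt[OF assms(1,6,7), of "1/2"] by simp
  have \<eta>_mid: "\<eta> m \<le> (\<eta> x1 + \<eta> x2) / 2"
    unfolding m_def using convex_onD[OF assms(2), of "1/2" x1 x2] assms(6,7)
    by (simp add: add_divide_distrib)
  have "(\<phi> m)\<^sup>2 < (1 - 1/2) * (\<phi> x1)\<^sup>2 + (1/2) * (\<phi> x2)\<^sup>2"
    using convex_on_nonneg_square_less[OF assms(3,6,7), of "1/2", folded m_def]
      assms(4)[OF \<open>m \<in> C\<close>] ne
    by simp
  from mult_strict_left_mono[OF this assms(5)]
  have "\<epsilon> * (\<phi> m)\<^sup>2 < (\<epsilon> * (\<phi> x1)\<^sup>2 + \<epsilon> * (\<phi> x2)\<^sup>2) / 2"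
    by (simp add: algebra_simps)
  with \<eta>_mid assms(8,9)[OF \<open>m \<in> C\<close>] show False
    by simp
qed

theorem lemma2p1:
  fixes K :: "(real ^ 'n) set" and C :: "(real ^ 'm) set"
    and f h :: "(real ^ 'n) \<times> (real ^ 'm) \<Rightarrow> real"
    and \<epsilon> :: real and y :: "real ^ 'n"
  assumes "K \<noteq> {}" "convex K" "closed K" "bounded K"
    and "C \<noteq> {}" "convex C" "closed C" "bounded C"
    and "continuous_on UNIV f" "continuous_on UNIV h"
    and "\<And>y'. y' \<in> K \<Longrightarrow> convex_on UNIV (\<lambda>z. f (y', z))"
    and "\<And>y'. y' \<in> K \<Longrightarrow> convex_on UNIV (\<lambda>z. h (y', z))"
    and "\<And>p. f p > 0"
    and "\<epsilon> > 0" and "y \<in> K"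
  shows "S_eps h f C \<epsilon> y \<noteq> {} \<and> (\<exists>\<kappa>. \<forall>x \<in> S_eps h f C \<epsilon> y. f (y, x) = \<kappa>)"
proof
  have "continuous_on C (\<lambda>z. (y, z))"
    by (intro continuous_intros)
  then have "continuous_on C (\<lambda>z. h (y, z) + \<epsilon> * (f (y, z))\<^sup>2)"
    using continuous_on_compose2[OF assms(9)] continuous_on_compose2[OF assms(10)]
    by (intro continuous_intros) auto
  moreover have "compact C"
    using assms(7,8) by (simp add: compact_eq_bounded_closed)
  ultimately show "S_eps h f C \<epsilon> y \<noteq> {}"
    using continuous_attains_inf[OF _ assms(5)] unfolding S_eps_def by blast
next
  have f_convex: "convex_on C (\<lambda>z. f (y, z))"
    by (rule convex_on_subset[OF assms(11)[OF assms(15)] subset_UNIV assms(6)])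
  have h_convex: "convex_on C (\<lambda>z. h (y, z))"
    by (rule convex_on_subset[OF assms(12)[OF assms(15)] subset_UNIV assms(6)])
  have "f (y, x1) = f (y, x2)" if "x1 \<in> S_eps h f C \<epsilon> y" "x2 \<in> S_eps h f C \<epsilon> y" for x1 x2
    using that unfolding S_eps_def
    by (intro argmin_convex_plus_square_const[OF assms(6) h_convex f_convex _ assms(14)])
      (auto intro: less_imp_le assms(13))
  then show "\<exists>\<kappa>. \<forall>x \<in> S_eps h f C \<epsilon> y. f (y, x) = \<kappa>"
    by blast
qed

end
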